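(* Let $(T,[\cdot,\cdot],[\cdot,\cdot,\cdot],\alpha)$ be a Hom-Lie-Yamaguti algebra, let $0\to\mathfrak{h}\xrightarrow{i}\hat T\xrightarrow{p}T\to0$ be an abelian extension of $T$ by $(\mathfrak{h},\beta)$ (with $\mathfrak{h}$ identified with $i(\mathfrak{h})$), and let $\sigma:T\to\hat T$ be a section. Define $$\nu(x_1,x_2)=[\sigma(x_1),\sigma(x_2)]_{\hat T}-\sigma([x_1,x_2]),\qquad \omega(x_1,x_2,x_3)=[\sigma(x_1),\sigma(x_2),\sigma(x_3)]_{\hat T}-\sigma([x_1,x_2,x_3]).$$ Then $\nu$ and $\omega$ take values in $\mathfrak{h}$, and $(\nu,\omega)$ is a (2,3)-cocycle of $T$ with coefficients in $\mathfrak{h}$ with respect to the representation $(\rho,D,\theta)$ given by $\rho(x_1)(u)=[\sigma(x_1),u]_{\hat T}$, $D(x_1,x_2)(u)=[\sigma(x_1),\sigma(x_2),u]_{\hat T}$, $\theta(x_1,x_2)(u)=[u,\sigma(x_1),\sigma(x_2)]_{\hat T}$.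
   Context: Throughout, vector spaces are over an algebraically closed field $\mathbb{K}$ of characteristic different from 2 and 3. A Hom-Lie-Yamaguti algebra (HLYA) is a vector space $T$ with a linear map $\alpha:T\to T$, a bilinear map $[\cdot,\cdot]$ and a trilinear map $[\cdot,\cdot,\cdot]$ on $T$ such that for all $x_i,y_i\in T$: (HLY01) $\alpha([x_1,x_2])=[\alpha(x_1),\alpha(x_2)]$; (HLY02) $\alpha([x_1,x_2,x_3])=[\alpha(x_1),\alpha(x_2),\alpha(x_3)]$; (HLY1) $[x_1,x_2]+[x_2,x_1]=0$; (HLY2) $[x_1,x_2,x_3]+[x_2,x_1,x_3]=0$; (HLY3) $\sum_{\mathrm{cyc}(x_1,x_2,x_3)}([[x_1,x_2],\alpha(x_3)]+[x_1,x_2,x_3])=0$; (HLY4) $[[x_1,x_2],\alpha(x_3),\alpha(y_1)]+[[x_2,x_3],\alpha(x_1),\alpha(y_1)]+[[x_3,x_1],\alpha(x_2),\alpha(y_1)]=0$; (HLY5) $[\alpha(x_1),\alpha(x_2),[y_1,y_2]]=[[x_1,x_2,y_1],\alpha^2(y_2)]+[\alpha^2(y_1),[x_1,x_2,y_2]]$; (HLY6) $[\alpha^2(x_1),\alpha^2(x_2),[y_1,y_2,y_3]]=[[x_1,x_2,y_1],\alpha^2(y_2),\alpha^2(y_3)]+[\alpha^2(y_1),[x_1,x_2,y_2],\alpha^2(y_3)]+[\alpha^2(y_1),\alpha^2(y_2),[x_1,x_2,y_3]]$. A homomorphism of HLYAs $\varphi:(T,\alpha)\to(T',\alpha')$ is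 a linear map with $\varphi\circ\alpha=\alpha'\circ\varphi$ preserving both brackets. An extension of $(T,\alpha)$ by a HLYA $(\mathfrak{h},\beta)$ is a HLYA $(\hat T,[\cdot,\cdot]_{\hat T},[\cdot,\cdot,\cdot]_{\hat T},\hat\alpha)$ with HLYA homomorphisms $i:\mathfrak{h}\to\hat T$ (injective) and $p:\hat T\to T$ (surjective), $\mathrm{Im}(i)=\mathrm{Ker}(p)$. It is abelian if $[u,v]_{\hat T}=0$ and $[u,v,z]_{\hat T}=[u,z,v]_{\hat T}=[z,u,v]_{\hat T}=0$ for all $u,v\in i(\mathfrak{h})$, $z\in\hat T$. A section is a linear map $\sigma:T\to\hat T$ with $p\circ\sigma=\mathrm{id}_T$ and $\hat\alpha\circ\sigma=\sigma\circ\alpha$. (The maps $\rho,D,\theta$ defined in the claim form a representation of $(T,\alpha)$ on $(\mathfrak{h},\beta)$.) For a representation $(\rho,D,\theta)$ of $(T,\alpha)$ on a Hom-vector space $(V,\beta)$, a (2,3)-cocycle is a pair of a bilinear map $\nu:T\times T\to V$ and a trilinear map $\omega:T^3\to V$ with $\nu(x_1,x_2)=-\nu(x_2,x_1)$, $\omega(x_1,x_2,x_3)=-\omega(x_2,x_1,x_3)$ and, for all $x_i,y_i\in T$: (CC01) $\nu(\alpha(x_1),\alpha(x_2))=\beta(\nu(x_1,x_2))$; (CC02) $\omega(\alpha(x_1),\alpha(x_2),\alpha(x_3))=\beta(\omega(x_1,x_2,x_3))$; (CC1) $\sum_{\mathrm{cyc}(x_1,x_2,x_3)}\big(\omega(x_1,x_2,x_3)-\rho(\alpha(x_1))\nu(x_2,x_3)+\nu([x_1,x_2],\alpha(x_3))\big)=0$;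 (CC2) $\sum_{\mathrm{cyc}(x_1,x_2,x_3)}\big(\theta(\alpha(x_1),\alpha(y_1))\nu(x_2,x_3)+\omega([x_1,x_2],\alpha(x_3),\alpha(y_1))\big)=0$; (CC3) $\omega(\alpha(x_1),\alpha(x_2),[y_1,y_2])+D(\alpha(x_1),\alpha(x_2))\nu(y_1,y_2)=\nu([x_1,x_2,y_1],\alpha^2(y_2))+\nu(\alpha^2(y_1),[x_1,x_2,y_2])+\rho(\alpha^2(y_1))\omega(x_1,x_2,y_2)-\rho(\alpha^2(y_2))\omega(x_1,x_2,y_1)$; (CC4) $\omega(\alpha^2(x_1),\alpha^2(x_2),[y_1,y_2,y_3])+D(\alpha^2(x_1),\alpha^2(x_2))\omega(y_1,y_2,y_3)=\omega([x_1,x_2,y_1],\alpha^2(y_2),\alpha^2(y_3))+\omega(\alpha^2(y_1),[x_1,x_2,y_2],\alpha^2(y_3))+\omega(\alpha^2(y_1),\alpha^2(y_2),[x_1,x_2,y_3])+\theta(\alpha^2(y_2),\alpha^2(y_3))\omega(x_1,x_2,y_1)-\theta(\alpha^2(y_1),\alpha^2(y_3))\omega(x_1,x_2,y_2)+D(\alpha^2(y_1),\alpha^2(y_2))\omega(x_1,x_2,y_3)$. *)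

theory Defs
  imports Main "HOL-Computational_Algebra.Polynomial"
begin

definition alg_closed_field :: "'k::field itself \<Rightarrow> bool" where
  "alg_closed_field _ \<longleftrightarrow> (\<forall>p :: 'k poly. degree p > 0 \<longrightarrow> (\<exists>x. poly p x = 0))"

definition char_not_2_3 :: "'k::field itself \<Rightarrow> bool" where
  "char_not_2_3 _ \<longleftrightarrow> (2::'k) \<noteq> 0 \<and> (3::'k) \<noteq> 0"

definition bilin :: "('k::field \<Rightarrow> 'a::ab_group_add \<Rightarrow> 'a) \<Rightarrow> ('k \<Rightarrow> 'b::ab_group_add \<Rightarrow> 'b)
    \<Rightarrow> ('k \<Rightarrow> 'c::ab_group_add \<Rightarrow> 'c) \<Rightarrow> ('a \<Rightarrow> 'b \<Rightarrow> 'c) \<Rightarrow> bool" where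
  "bilin s1 s2 s3 f \<longleftrightarrow>
     (\<forall>x. Vector_Spaces.linear s2 s3 (f x)) \<and> (\<forall>y. Vector_Spaces.linear s1 s3 (\<lambda>x. f x y))"

definition trilin :: "('k::field \<Rightarrow> 'a::ab_group_add \<Rightarrow> 'a) \<Rightarrow> ('k \<Rightarrow> 'b::ab_group_add \<Rightarrow> 'b)
    \<Rightarrow> ('k \<Rightarrow> 'c::ab_group_add \<Rightarrow> 'c) \<Rightarrow> ('k \<Rightarrow> 'd::ab_group_add \<Rightarrow> 'd)
    \<Rightarrow> ('a \<Rightarrow> 'b \<Rightarrow> 'c \<Rightarrow> 'd) \<Rightarrow> bool" where
  "trilin s1 s2 s3 s4 f \<longleftrightarrow>
     (\<forall>x y. Vector_Spaces.linear s3 s4 (f x y)) \<and>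
     (\<forall>x z. Vector_Spaces.linear s2 s4 (\<lambda>y. f x y z)) \<and>
     (\<forall>y z. Vector_Spaces.linear s1 s4 (\<lambda>x. f x y z))"

definition HLYA :: "('k::field \<Rightarrow> 'a::ab_group_add \<Rightarrow> 'a) \<Rightarrow> ('a \<Rightarrow> 'a \<Rightarrow> 'a)
    \<Rightarrow> ('a \<Rightarrow> 'a \<Rightarrow> 'a \<Rightarrow> 'a) \<Rightarrow> ('a \<Rightarrow> 'a) \<Rightarrow> bool" where
  "HLYA s br tr \<alpha> \<longleftrightarrow>
     Vector_Spaces.linear s s \<alpha> \<and> bilin s s s br \<and> trilin s s s s tr \<and>
     (\<forall>x1 x2. \<alpha> (br x1 x2) = br (\<alpha> x1) (\<alpha> x2)) \<and>
     (\<forall>x1 x2 x3. \<alpha> (tr x1 x2 x3) = tr (\<alpha> x1) (\<alpha> x2) (\<alpha> x3)) \<and>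
     (\<forall>x1 x2. br x1 x2 + br x2 x1 = 0) \<and>
     (\<forall>x1 x2 x3. tr x1 x2 x3 + tr x2 x1 x3 = 0) \<and>
     (\<forall>x1 x2 x3.
        (br (br x1 x2) (\<alpha> x3) + tr x1 x2 x3) + (br (br x2 x3) (\<alpha> x1) + tr x2 x3 x1)
        + (br (br x3 x1) (\<alpha> x2) + tr x3 x1 x2) = 0) \<and>
     (\<forall>x1 x2 x3 y1.
        tr (br x1 x2) (\<alpha> x3) (\<alpha> y1) + tr (br x2 x3) (\<alpha> x1) (\<alpha> y1)
        + tr (br x3 x1) (\<alpha> x2) (\<alpha> y1) = 0) \<and>
     (\<forall>x1 x2 y1 y2.
        tr (\<alpha> x1) (\<alpha> x2) (br y1 y2)
        = br (tr x1 x2 y1) (\<alpha> (\<alpha> y2)) + br (\<alpha> (\<alpha> y1)) (tr x1 x2 y2)) \<and>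
     (\<forall>x1 x2 y1 y2 y3.
        tr (\<alpha> (\<alpha> x1)) (\<alpha> (\<alpha> x2)) (tr y1 y2 y3)
        = tr (tr x1 x2 y1) (\<alpha> (\<alpha> y2)) (\<alpha> (\<alpha> y3))
          + tr (\<alpha> (\<alpha> y1)) (tr x1 x2 y2) (\<alpha> (\<alpha> y3))
          + tr (\<alpha> (\<alpha> y1)) (\<alpha> (\<alpha> y2)) (tr x1 x2 y3))"

definition HLYA_hom :: "('k::field \<Rightarrow> 'a::ab_group_add \<Rightarrow> 'a) \<Rightarrow> ('a \<Rightarrow> 'a \<Rightarrow> 'a)
    \<Rightarrow> ('a \<Rightarrow> 'a \<Rightarrow> 'a \<Rightarrow> 'a) \<Rightarrow> ('a \<Rightarrow> 'a)
    \<Rightarrow> ('k \<Rightarrow> 'b::ab_group_add \<Rightarrow> 'b) \<Rightarrow> ('b \<Rightarrow> 'b \<Rightarrow> 'b)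
    \<Rightarrow> ('b \<Rightarrow> 'b \<Rightarrow> 'b \<Rightarrow> 'b) \<Rightarrow> ('b \<Rightarrow> 'b) \<Rightarrow> ('a \<Rightarrow> 'b) \<Rightarrow> bool" where
  "HLYA_hom s1 br1 tr1 \<alpha>1 s2 br2 tr2 \<alpha>2 \<phi> \<longleftrightarrow>
     Vector_Spaces.linear s1 s2 \<phi> \<and>
     (\<forall>x. \<phi> (\<alpha>1 x) = \<alpha>2 (\<phi> x)) \<and>
     (\<forall>x y. \<phi> (br1 x y) = br2 (\<phi> x) (\<phi> y)) \<and>
     (\<forall>x y z. \<phi> (tr1 x y z) = tr2 (\<phi> x) (\<phi> y) (\<phi> z))"

definition HLYA_extension where
  "HLYA_extension sT brT trT \<alpha> sh brh trh \<beta> sE brE trE \<alpha>E i p \<longleftrightarrow>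
     HLYA sT brT trT \<alpha> \<and> HLYA sh brh trh \<beta> \<and> HLYA sE brE trE \<alpha>E \<and>
     HLYA_hom sh brh trh \<beta> sE brE trE \<alpha>E i \<and> inj i \<and>
     HLYA_hom sE brE trE \<alpha>E sT brT trT \<alpha> p \<and> surj p \<and>
     range i = {z. p z = 0}"

definition abelian_extension where
  "abelian_extension sT brT trT \<alpha> sh brh trh \<beta> sE brE trE \<alpha>E i p \<longleftrightarrow>
     HLYA_extension sT brT trT \<alpha> sh brh trh \<beta> sE brE trE \<alpha>E i p \<and>
     (\<forall>u\<in>range i. \<forall>v\<in>range i. brE u v = 0 \<and>
        (\<forall>z. trE u v z = 0 \<and> trE u z v = 0 \<and> trE z u v = 0))"

definition is_section where
  "is_section sT \<alpha> sE \<alpha>E p \<sigma> \<longleftrightarrow>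
     Vector_Spaces.linear sT sE \<sigma> \<and> (\<forall>x. p (\<sigma> x) = x) \<and> (\<forall>x. \<alpha>E (\<sigma> x) = \<sigma> (\<alpha> x))"

text \<open>Coefficients in a Hom-vector space (V,beta), where V is given as a subset of an
  ambient vector space (type 'v with scalar multiplication sV); nu, omega take values in V.\<close>

definition cocycle23 :: "('k::field \<Rightarrow> 't::ab_group_add \<Rightarrow> 't) \<Rightarrow> ('t \<Rightarrow> 't \<Rightarrow> 't)
    \<Rightarrow> ('t \<Rightarrow> 't \<Rightarrow> 't \<Rightarrow> 't) \<Rightarrow> ('t \<Rightarrow> 't)
    \<Rightarrow> ('k \<Rightarrow> 'v::ab_group_add \<Rightarrow> 'v) \<Rightarrow> 'v set \<Rightarrow> ('v \<Rightarrow> 'v)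
    \<Rightarrow> ('t \<Rightarrow> 'v \<Rightarrow> 'v) \<Rightarrow> ('t \<Rightarrow> 't \<Rightarrow> 'v \<Rightarrow> 'v) \<Rightarrow> ('t \<Rightarrow> 't \<Rightarrow> 'v \<Rightarrow> 'v)
    \<Rightarrow> ('t \<Rightarrow> 't \<Rightarrow> 'v) \<Rightarrow> ('t \<Rightarrow> 't \<Rightarrow> 't \<Rightarrow> 'v) \<Rightarrow> bool" where
  "cocycle23 sT br tr \<alpha> sV V \<beta> \<rho> D \<theta> \<nu> \<omega> \<longleftrightarrow>
     (\<forall>x1 x2. \<nu> x1 x2 \<in> V) \<and> (\<forall>x1 x2 x3. \<omega> x1 x2 x3 \<in> V) \<and>
     bilin sT sT sV \<nu> \<and> trilin sT sT sT sV \<omega> \<and>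
     (\<forall>x1 x2. \<nu> x1 x2 = - \<nu> x2 x1) \<and>
     (\<forall>x1 x2 x3. \<omega> x1 x2 x3 = - \<omega> x2 x1 x3) \<and>
     (\<forall>x1 x2. \<nu> (\<alpha> x1) (\<alpha> x2) = \<beta> (\<nu> x1 x2)) \<and>
     (\<forall>x1 x2 x3. \<omega> (\<alpha> x1) (\<alpha> x2) (\<alpha> x3) = \<beta> (\<omega> x1 x2 x3)) \<and>
     (\<forall>x1 x2 x3.
        (\<omega> x1 x2 x3 - \<rho> (\<alpha> x1) (\<nu> x2 x3) + \<nu> (br x1 x2) (\<alpha> x3))
      + (\<omega> x2 x3 x1 - \<rho> (\<alpha> x2) (\<nu> x3 x1) + \<nu> (br x2 x3) (\<alpha> x1))
      + (\<omega> x3 x1 x2 - \<rho> (\<alpha> x3) (\<nu> x1 x2) + \<nu> (br x3 x1) (\<alpha> x2)) = 0) \<and>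
     (\<forall>x1 x2 x3 y1.
        (\<theta> (\<alpha> x1) (\<alpha> y1) (\<nu> x2 x3) + \<omega> (br x1 x2) (\<alpha> x3) (\<alpha> y1))
      + (\<theta> (\<alpha> x2) (\<alpha> y1) (\<nu> x3 x1) + \<omega> (br x2 x3) (\<alpha> x1) (\<alpha> y1))
      + (\<theta> (\<alpha> x3) (\<alpha> y1) (\<nu> x1 x2) + \<omega> (br x3 x1) (\<alpha> x2) (\<alpha> y1)) = 0) \<and>
     (\<forall>x1 x2 y1 y2.
        \<omega> (\<alpha> x1) (\<alpha> x2) (br y1 y2) + D (\<alpha> x1) (\<alpha> x2) (\<nu> y1 y2)
        = \<nu> (tr x1 x2 y1) (\<alpha> (\<alpha> y2)) + \<nu> (\<alpha> (\<alpha> y1)) (tr x1 x2 y2)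
          + \<rho> (\<alpha> (\<alpha> y1)) (\<omega> x1 x2 y2) - \<rho> (\<alpha> (\<alpha> y2)) (\<omega> x1 x2 y1)) \<and>
     (\<forall>x1 x2 y1 y2 y3.
        \<omega> (\<alpha> (\<alpha> x1)) (\<alpha> (\<alpha> x2)) (tr y1 y2 y3) + D (\<alpha> (\<alpha> x1)) (\<alpha> (\<alpha> x2)) (\<omega> y1 y2 y3)
        = \<omega> (tr x1 x2 y1) (\<alpha> (\<alpha> y2)) (\<alpha> (\<alpha> y3))
          + \<omega> (\<alpha> (\<alpha> y1)) (tr x1 x2 y2) (\<alpha> (\<alpha> y3))
          + \<omega> (\<alpha> (\<alpha> y1)) (\<alpha> (\<alpha> y2)) (tr x1 x2 y3)
          + \<theta> (\<alpha> (\<alpha> y2)) (\<alpha> (\<alpha> y3)) (\<omega> x1 x2 y1)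
          - \<theta> (\<alpha> (\<alpha> y1)) (\<alpha> (\<alpha> y3)) (\<omega> x1 x2 y2)
          + D (\<alpha> (\<alpha> y1)) (\<alpha> (\<alpha> y2)) (\<omega> x1 x2 y3))"

end

theory Submission
  imports Defs
begin

text \<open>Evaluate a defining identity of \<open>\<hat>T\<close> at values of the section \<open>\<sigma>\<close> and rewrite every
  bracket of \<open>\<sigma>\<close>-values as its defect plus \<open>\<sigma>\<close> of the bracket in \<open>T\<close>. By multilinearity and
  skew-symmetry the identity splits into the corresponding cocycle identity for \<open>(\<nu>, \<omega>)\<close> plus
  \<open>\<sigma>\<close> applied to the same identity in \<open>T\<close>; the latter vanishes, hence so does the former.
  The defects lie in \<open>h = ker p\<close> because \<open>p\<close> preserves brackets and \<open>p \<circ> \<sigma> = id\<close>.\<close>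

lemma linear_map_add: "Vector_Spaces.linear s1 s2 f \<Longrightarrow> f (x + y) = f x + f y"
  by (simp add: Vector_Spaces.linear_iff)

lemma linear_map_diff: "Vector_Spaces.linear s1 s2 f \<Longrightarrow> f (x - y) = f x - f y"
  using module_hom.diff[of s1 s2 f] by (simp add: module_hom_iff_linear)

lemma linear_map_zero: "Vector_Spaces.linear s1 s2 f \<Longrightarrow> f 0 = 0"
  using module_hom.zero[of s1 s2 f] by (simp add: module_hom_iff_linear)

lemma linear_map_neg: "Vector_Spaces.linear s1 s2 f \<Longrightarrow> f (- x) = - f x"
  using module_hom.neg[of s1 s2 f] by (simp add: module_hom_iff_linear)

lemma linear_compose_fun:
  "Vector_Spaces.linear s1 s2 f \<Longrightarrow> Vector_Spaces.linear s2 s3 g \<Longrightarrow> Vector_Spaces.linear s1 s3 (\<lambda>x. g (f x))"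
  using Vector_Spaces.linear_compose[of s1 s2 f s3 g] by (simp add: o_def)

lemma linear_diff_fun:
  assumes "Vector_Spaces.linear s1 s2 f" "Vector_Spaces.linear s1 s2 g"
  shows "Vector_Spaces.linear s1 s2 (\<lambda>x. f x - g x)"
proof -
  have "vector_space_pair s1 s2"
    using assms(1) by (simp add: Vector_Spaces.linear_iff vector_space_pair_def)
  then show ?thesis using assms by (rule vector_space_pair.linear_compose_sub)
qed

locale hom_lie_yamaguti =
  fixes s :: "'k::field \<Rightarrow> 'a::ab_group_add \<Rightarrow> 'a"
    and br :: "'a \<Rightarrow> 'a \<Rightarrow> 'a" and tr :: "'a \<Rightarrow> 'a \<Rightarrow> 'a \<Rightarrow> 'a" and \<alpha> :: "'a \<Rightarrow> 'a"
  assumes HLYA: "HLYA s br tr \<alpha>"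
begin

lemma linear_twist: "Vector_Spaces.linear s s \<alpha>"
  and bilinear: "bilin s s s br"
  and trilinear: "trilin s s s s tr"
  and twist_bracket: "\<alpha> (br x y) = br (\<alpha> x) (\<alpha> y)"
  and twist_triple: "\<alpha> (tr x y z) = tr (\<alpha> x) (\<alpha> y) (\<alpha> z)"
  and cyclic_bracket_triple:
    "(br (br x1 x2) (\<alpha> x3) + tr x1 x2 x3) + (br (br x2 x3) (\<alpha> x1) + tr x2 x3 x1)
      + (br (br x3 x1) (\<alpha> x2) + tr x3 x1 x2) = 0"
  and cyclic_triple_bracket:
    "tr (br x1 x2) (\<alpha> x3) (\<alpha> y1) + tr (br x2 x3) (\<alpha> x1) (\<alpha> y1)
      + tr (br x3 x1) (\<alpha> x2) (\<alpha> y1) = 0"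
  and triple_derivation_bracket:
    "tr (\<alpha> x1) (\<alpha> x2) (br y1 y2)
      = br (tr x1 x2 y1) (\<alpha> (\<alpha> y2)) + br (\<alpha> (\<alpha> y1)) (tr x1 x2 y2)"
  and triple_derivation_triple:
    "tr (\<alpha> (\<alpha> x1)) (\<alpha> (\<alpha> x2)) (tr y1 y2 y3)
      = tr (tr x1 x2 y1) (\<alpha> (\<alpha> y2)) (\<alpha> (\<alpha> y3))
        + tr (\<alpha> (\<alpha> y1)) (tr x1 x2 y2) (\<alpha> (\<alpha> y3))
        + tr (\<alpha> (\<alpha> y1)) (\<alpha> (\<alpha> y2)) (tr x1 x2 y3)"
  using HLYA unfolding HLYA_def by fast+

lemma bracket_skew: "br x y = - br y x"
  using HLYA unfolding HLYA_def by (metis add_eq_0_iff)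

lemma triple_skew: "tr x y z = - tr y x z"
  using HLYA unfolding HLYA_def by (metis add_eq_0_iff)

lemma bracket_add_left: "br (x + y) z = br x z + br y z"
  and bracket_add_right: "br x (y + z) = br x y + br x z"
  using bilinear unfolding bilin_def by (auto intro: linear_map_add)

lemma triple_add_left: "tr (x + x') y z = tr x y z + tr x' y z"
  using trilinear linear_map_add[of s s "\<lambda>x. tr x y z"] unfolding trilin_def by simp

lemma triple_add_middle: "tr x (y + y') z = tr x y z + tr x y' z"
  using trilinear linear_map_add[of s s "\<lambda>y. tr x y z"] unfolding trilin_def by simp

lemma triple_add_right: "tr x y (z + z') = tr x y z + tr x y z'"
  using trilinear linear_map_add[of s s "tr x y"] unfolding trilin_def by simp

end

locale HLYA_section =
  T: hom_lie_yamaguti sT brT trT \<alpha> + E: hom_lie_yamaguti sE brE trE \<alpha>E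
  for sT :: "'k::field \<Rightarrow> 't::ab_group_add \<Rightarrow> 't" and brT trT \<alpha>
    and sE :: "'k \<Rightarrow> 'e::ab_group_add \<Rightarrow> 'e" and brE trE \<alpha>E +
  fixes \<sigma> :: "'t \<Rightarrow> 'e"
  assumes linear_section: "Vector_Spaces.linear sT sE \<sigma>"
    and twist_section: "\<alpha>E (\<sigma> x) = \<sigma> (\<alpha> x)"
begin

definition bracket_defect :: "'t \<Rightarrow> 't \<Rightarrow> 'e" where
  "bracket_defect x y = brE (\<sigma> x) (\<sigma> y) - \<sigma> (brT x y)"

definition triple_defect :: "'t \<Rightarrow> 't \<Rightarrow> 't \<Rightarrow> 'e" where
  "triple_defect x y z = trE (\<sigma> x) (\<sigma> y) (\<sigma> z) - \<sigma> (trT x y z)"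

lemma bracket_section: "brE (\<sigma> x) (\<sigma> y) = bracket_defect x y + \<sigma> (brT x y)"
  by (simp add: bracket_defect_def)

lemma triple_section: "trE (\<sigma> x) (\<sigma> y) (\<sigma> z) = triple_defect x y z + \<sigma> (trT x y z)"
  by (simp add: triple_defect_def)

lemma bilin_bracket_defect: "bilin sT sT sE bracket_defect"
  using E.bilinear T.bilinear unfolding bilin_def bracket_defect_def[abs_def]
  by (auto intro!: linear_diff_fun linear_compose_fun[OF linear_section] linear_compose_fun[OF _ linear_section])

lemma trilin_triple_defect: "trilin sT sT sT sE triple_defect"
  using E.trilinear T.trilinear unfolding trilin_def triple_defect_def[abs_def]
  by (auto intro!: linear_diff_fun linear_compose_fun[OF linear_section] linear_compose_fun[OF _ linear_section])

lemma bracket_defect_skew: "bracket_defect x y = - bracket_defect y x"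
  unfolding bracket_defect_def
  by (simp add: E.bracket_skew[of "\<sigma> x"] T.bracket_skew[of x] linear_map_neg[OF linear_section])

lemma triple_defect_skew: "triple_defect x y z = - triple_defect y x z"
  unfolding triple_defect_def
  by (simp add: E.triple_skew[of "\<sigma> x"] T.triple_skew[of x] linear_map_neg[OF linear_section])

lemma twist_bracket_defect: "bracket_defect (\<alpha> x) (\<alpha> y) = \<alpha>E (bracket_defect x y)"
  unfolding bracket_defect_def
  by (simp add: linear_map_diff[OF E.linear_twist] E.twist_bracket T.twist_bracket twist_section)

lemma twist_triple_defect: "triple_defect (\<alpha> x) (\<alpha> y) (\<alpha> z) = \<alpha>E (triple_defect x y z)"
  unfolding triple_defect_def
  by (simp add: linear_map_diff[OF E.linear_twist] E.twist_triple T.twist_triple twist_section)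

lemma bracket_defect_in_kernel:
  assumes "HLYA_hom sE brE trE \<alpha>E sT brT trT \<alpha> p" and "\<And>x. p (\<sigma> x) = x"
  shows "p (bracket_defect x y) = 0"
  using assms linear_map_diff[of sE sT p] by (simp add: HLYA_hom_def bracket_defect_def)

lemma triple_defect_in_kernel:
  assumes "HLYA_hom sE brE trE \<alpha>E sT brT trT \<alpha> p" and "\<And>x. p (\<sigma> x) = x"
  shows "p (triple_defect x y z) = 0"
  using assms linear_map_diff[of sE sT p] by (simp add: HLYA_hom_def triple_defect_def)

lemmas expand_section =
  bracket_section triple_section twist_section linear_map_add[OF linear_section]
  E.bracket_add_left E.bracket_add_right E.triple_add_left E.triple_add_middle E.triple_add_right

lemma lift_cyclic_bracket_triple:
  "(brE (brE (\<sigma> x1) (\<sigma> x2)) (\<alpha>E (\<sigma> x3)) + trE (\<sigma> x1) (\<sigma> x2) (\<sigma> x3))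
   + (brE (brE (\<sigma> x2) (\<sigma> x3)) (\<alpha>E (\<sigma> x1)) + trE (\<sigma> x2) (\<sigma> x3) (\<sigma> x1))
   + (brE (brE (\<sigma> x3) (\<sigma> x1)) (\<alpha>E (\<sigma> x2)) + trE (\<sigma> x3) (\<sigma> x1) (\<sigma> x2))
 = ((triple_defect x1 x2 x3 - brE (\<sigma> (\<alpha> x1)) (bracket_defect x2 x3) + bracket_defect (brT x1 x2) (\<alpha> x3))
   + (triple_defect x2 x3 x1 - brE (\<sigma> (\<alpha> x2)) (bracket_defect x3 x1) + bracket_defect (brT x2 x3) (\<alpha> x1))
   + (triple_defect x3 x1 x2 - brE (\<sigma> (\<alpha> x3)) (bracket_defect x1 x2) + bracket_defect (brT x3 x1) (\<alpha> x2)))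
   + \<sigma> ((brT (brT x1 x2) (\<alpha> x3) + trT x1 x2 x3) + (brT (brT x2 x3) (\<alpha> x1) + trT x2 x3 x1)
        + (brT (brT x3 x1) (\<alpha> x2) + trT x3 x1 x2))"
  by (simp add: expand_section E.bracket_skew[of "bracket_defect _ _" "\<sigma> _"] algebra_simps)

lemma lift_cyclic_triple_bracket:
  "trE (brE (\<sigma> x1) (\<sigma> x2)) (\<alpha>E (\<sigma> x3)) (\<alpha>E (\<sigma> y1))
   + trE (brE (\<sigma> x2) (\<sigma> x3)) (\<alpha>E (\<sigma> x1)) (\<alpha>E (\<sigma> y1))
   + trE (brE (\<sigma> x3) (\<sigma> x1)) (\<alpha>E (\<sigma> x2)) (\<alpha>E (\<sigma> y1))
 = ((trE (bracket_defect x2 x3) (\<sigma> (\<alpha> x1)) (\<sigma> (\<alpha> y1)) + triple_defect (brT x1 x2) (\<alpha> x3) (\<alpha> y1))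
   + (trE (bracket_defect x3 x1) (\<sigma> (\<alpha> x2)) (\<sigma> (\<alpha> y1)) + triple_defect (brT x2 x3) (\<alpha> x1) (\<alpha> y1))
   + (trE (bracket_defect x1 x2) (\<sigma> (\<alpha> x3)) (\<sigma> (\<alpha> y1)) + triple_defect (brT x3 x1) (\<alpha> x2) (\<alpha> y1)))
   + \<sigma> (trT (brT x1 x2) (\<alpha> x3) (\<alpha> y1) + trT (brT x2 x3) (\<alpha> x1) (\<alpha> y1)
        + trT (brT x3 x1) (\<alpha> x2) (\<alpha> y1))"
  by (simp add: expand_section algebra_simps)

lemma lift_triple_derivation_bracket:
  "trE (\<alpha>E (\<sigma> x1)) (\<alpha>E (\<sigma> x2)) (brE (\<sigma> y1) (\<sigma> y2))
   - (brE (trE (\<sigma> x1) (\<sigma> x2) (\<sigma> y1)) (\<alpha>E (\<alpha>E (\<sigma> y2)))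
      + brE (\<alpha>E (\<alpha>E (\<sigma> y1))) (trE (\<sigma> x1) (\<sigma> x2) (\<sigma> y2)))
 = ((triple_defect (\<alpha> x1) (\<alpha> x2) (brT y1 y2) + trE (\<sigma> (\<alpha> x1)) (\<sigma> (\<alpha> x2)) (bracket_defect y1 y2))
    - (bracket_defect (trT x1 x2 y1) (\<alpha> (\<alpha> y2)) + bracket_defect (\<alpha> (\<alpha> y1)) (trT x1 x2 y2)
       + brE (\<sigma> (\<alpha> (\<alpha> y1))) (triple_defect x1 x2 y2) - brE (\<sigma> (\<alpha> (\<alpha> y2))) (triple_defect x1 x2 y1)))
   + \<sigma> (trT (\<alpha> x1) (\<alpha> x2) (brT y1 y2)
        - (brT (trT x1 x2 y1) (\<alpha> (\<alpha> y2)) + brT (\<alpha> (\<alpha> y1)) (trT x1 x2 y2)))"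
  by (simp add: expand_section linear_map_diff[OF linear_section]
      E.bracket_skew[of "triple_defect _ _ _" "\<sigma> _"] algebra_simps)

lemma lift_triple_derivation_triple:
  "trE (\<alpha>E (\<alpha>E (\<sigma> x1))) (\<alpha>E (\<alpha>E (\<sigma> x2))) (trE (\<sigma> y1) (\<sigma> y2) (\<sigma> y3))
   - (trE (trE (\<sigma> x1) (\<sigma> x2) (\<sigma> y1)) (\<alpha>E (\<alpha>E (\<sigma> y2))) (\<alpha>E (\<alpha>E (\<sigma> y3)))
      + trE (\<alpha>E (\<alpha>E (\<sigma> y1))) (trE (\<sigma> x1) (\<sigma> x2) (\<sigma> y2)) (\<alpha>E (\<alpha>E (\<sigma> y3)))
      + trE (\<alpha>E (\<alpha>E (\<sigma> y1))) (\<alpha>E (\<alpha>E (\<sigma> y2))) (trE (\<sigma> x1) (\<sigma> x2) (\<sigma> y3)))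
 = ((triple_defect (\<alpha> (\<alpha> x1)) (\<alpha> (\<alpha> x2)) (trT y1 y2 y3)
       + trE (\<sigma> (\<alpha> (\<alpha> x1))) (\<sigma> (\<alpha> (\<alpha> x2))) (triple_defect y1 y2 y3))
    - (triple_defect (trT x1 x2 y1) (\<alpha> (\<alpha> y2)) (\<alpha> (\<alpha> y3))
       + triple_defect (\<alpha> (\<alpha> y1)) (trT x1 x2 y2) (\<alpha> (\<alpha> y3))
       + triple_defect (\<alpha> (\<alpha> y1)) (\<alpha> (\<alpha> y2)) (trT x1 x2 y3)
       + trE (triple_defect x1 x2 y1) (\<sigma> (\<alpha> (\<alpha> y2))) (\<sigma> (\<alpha> (\<alpha> y3)))
       - trE (triple_defect x1 x2 y2) (\<sigma> (\<alpha> (\<alpha> y1))) (\<sigma> (\<alpha> (\<alpha> y3)))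
       + trE (\<sigma> (\<alpha> (\<alpha> y1))) (\<sigma> (\<alpha> (\<alpha> y2))) (triple_defect x1 x2 y3)))
   + \<sigma> (trT (\<alpha> (\<alpha> x1)) (\<alpha> (\<alpha> x2)) (trT y1 y2 y3)
        - (trT (trT x1 x2 y1) (\<alpha> (\<alpha> y2)) (\<alpha> (\<alpha> y3))
           + trT (\<alpha> (\<alpha> y1)) (trT x1 x2 y2) (\<alpha> (\<alpha> y3))
           + trT (\<alpha> (\<alpha> y1)) (\<alpha> (\<alpha> y2)) (trT x1 x2 y3)))"
  by (simp add: expand_section linear_map_diff[OF linear_section]
      E.triple_skew[of "\<sigma> _" "triple_defect _ _ _"] algebra_simps)

lemma section_zero: "\<sigma> 0 = 0"
  by (rule linear_map_zero[OF linear_section])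

lemma cocycle_cyclic_bracket_triple:
  "(triple_defect x1 x2 x3 - brE (\<sigma> (\<alpha> x1)) (bracket_defect x2 x3) + bracket_defect (brT x1 x2) (\<alpha> x3))
   + (triple_defect x2 x3 x1 - brE (\<sigma> (\<alpha> x2)) (bracket_defect x3 x1) + bracket_defect (brT x2 x3) (\<alpha> x1))
   + (triple_defect x3 x1 x2 - brE (\<sigma> (\<alpha> x3)) (bracket_defect x1 x2) + bracket_defect (brT x3 x1) (\<alpha> x2)) = 0"
  using lift_cyclic_bracket_triple[of x1 x2 x3]
  by (simp only: E.cyclic_bracket_triple T.cyclic_bracket_triple section_zero) simp

lemma cocycle_cyclic_triple_bracket:
  "(trE (bracket_defect x2 x3) (\<sigma> (\<alpha> x1)) (\<sigma> (\<alpha> y1)) + triple_defect (brT x1 x2) (\<alpha> x3) (\<alpha> y1))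
   + (trE (bracket_defect x3 x1) (\<sigma> (\<alpha> x2)) (\<sigma> (\<alpha> y1)) + triple_defect (brT x2 x3) (\<alpha> x1) (\<alpha> y1))
   + (trE (bracket_defect x1 x2) (\<sigma> (\<alpha> x3)) (\<sigma> (\<alpha> y1)) + triple_defect (brT x3 x1) (\<alpha> x2) (\<alpha> y1)) = 0"
  using lift_cyclic_triple_bracket[of x1 x2 x3 y1]
  by (simp only: E.cyclic_triple_bracket T.cyclic_triple_bracket section_zero) simp

lemma cocycle_triple_derivation_bracket:
  "triple_defect (\<alpha> x1) (\<alpha> x2) (brT y1 y2) + trE (\<sigma> (\<alpha> x1)) (\<sigma> (\<alpha> x2)) (bracket_defect y1 y2)
   = bracket_defect (trT x1 x2 y1) (\<alpha> (\<alpha> y2)) + bracket_defect (\<alpha> (\<alpha> y1)) (trT x1 x2 y2)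
     + brE (\<sigma> (\<alpha> (\<alpha> y1))) (triple_defect x1 x2 y2) - brE (\<sigma> (\<alpha> (\<alpha> y2))) (triple_defect x1 x2 y1)"
  using lift_triple_derivation_bracket[of x1 x2 y1 y2]
  by (simp only: E.triple_derivation_bracket T.triple_derivation_bracket diff_self section_zero) simp

lemma cocycle_triple_derivation_triple:
  "triple_defect (\<alpha> (\<alpha> x1)) (\<alpha> (\<alpha> x2)) (trT y1 y2 y3)
     + trE (\<sigma> (\<alpha> (\<alpha> x1))) (\<sigma> (\<alpha> (\<alpha> x2))) (triple_defect y1 y2 y3)
   = triple_defect (trT x1 x2 y1) (\<alpha> (\<alpha> y2)) (\<alpha> (\<alpha> y3))
     + triple_defect (\<alpha> (\<alpha> y1)) (trT x1 x2 y2) (\<alpha> (\<alpha> y3))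
     + triple_defect (\<alpha> (\<alpha> y1)) (\<alpha> (\<alpha> y2)) (trT x1 x2 y3)
     + trE (triple_defect x1 x2 y1) (\<sigma> (\<alpha> (\<alpha> y2))) (\<sigma> (\<alpha> (\<alpha> y3)))
     - trE (triple_defect x1 x2 y2) (\<sigma> (\<alpha> (\<alpha> y1))) (\<sigma> (\<alpha> (\<alpha> y3)))
     + trE (\<sigma> (\<alpha> (\<alpha> y1))) (\<sigma> (\<alpha> (\<alpha> y2))) (triple_defect x1 x2 y3)"
  using lift_triple_derivation_triple[of x1 x2 y1 y2 y3]
  \<comment> \<open>instantiated: uninstantiated, the rule rewrites its own right-hand side forever\<close>
  by (simp only: E.triple_derivation_triple[of "\<sigma> x1" "\<sigma> x2" "\<sigma> y1" "\<sigma> y2" "\<sigma> y3"]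
      T.triple_derivation_triple[of x1 x2 y1 y2 y3] diff_self section_zero) simp

lemma cocycle23_defects:
  assumes "\<And>x y. bracket_defect x y \<in> V" and "\<And>x y z. triple_defect x y z \<in> V"
  shows "cocycle23 sT brT trT \<alpha> sE V \<alpha>E (\<lambda>x u. brE (\<sigma> x) u)
           (\<lambda>x1 x2 u. trE (\<sigma> x1) (\<sigma> x2) u) (\<lambda>x1 x2 u. trE u (\<sigma> x1) (\<sigma> x2))
           bracket_defect triple_defect"
  unfolding cocycle23_def
  by (intro conjI allI assms bilin_bracket_defect trilin_triple_defect
      bracket_defect_skew triple_defect_skew twist_bracket_defect twist_triple_defect
      cocycle_cyclic_bracket_triple cocycle_cyclic_triple_bracket
      cocycle_triple_derivation_bracket cocycle_triple_derivation_triple)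

end

theorem lemma4p4:
  fixes sT :: "'k::field \<Rightarrow> 't::ab_group_add \<Rightarrow> 't"
    and brT :: "'t \<Rightarrow> 't \<Rightarrow> 't" and trT :: "'t \<Rightarrow> 't \<Rightarrow> 't \<Rightarrow> 't" and \<alpha> :: "'t \<Rightarrow> 't"
    and sh :: "'k \<Rightarrow> 'h::ab_group_add \<Rightarrow> 'h"
    and brh :: "'h \<Rightarrow> 'h \<Rightarrow> 'h" and trh :: "'h \<Rightarrow> 'h \<Rightarrow> 'h \<Rightarrow> 'h" and \<beta> :: "'h \<Rightarrow> 'h"
    and sE :: "'k \<Rightarrow> 'e::ab_group_add \<Rightarrow> 'e"
    and brE :: "'e \<Rightarrow> 'e \<Rightarrow> 'e" and trE :: "'e \<Rightarrow> 'e \<Rightarrow> 'e \<Rightarrow> 'e" and \<alpha>E :: "'e \<Rightarrow> 'e"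
    and i :: "'h \<Rightarrow> 'e" and p :: "'e \<Rightarrow> 't" and \<sigma> :: "'t \<Rightarrow> 'e"
  assumes "alg_closed_field TYPE('k)" and "char_not_2_3 TYPE('k)"
    and "abelian_extension sT brT trT \<alpha> sh brh trh \<beta> sE brE trE \<alpha>E i p"
    and "is_section sT \<alpha> sE \<alpha>E p \<sigma>"
  shows "cocycle23 sT brT trT \<alpha> sE (range i) \<alpha>E
           (\<lambda>x u. brE (\<sigma> x) u)
           (\<lambda>x1 x2 u. trE (\<sigma> x1) (\<sigma> x2) u)
           (\<lambda>x1 x2 u. trE u (\<sigma> x1) (\<sigma> x2))
           (\<lambda>x1 x2. brE (\<sigma> x1) (\<sigma> x2) - \<sigma> (brT x1 x2))
           (\<lambda>x1 x2 x3. trE (\<sigma> x1) (\<sigma> x2) (\<sigma> x3) - \<sigma> (trT x1 x2 x3))"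
proof -
  from assms(3) have "HLYA sT brT trT \<alpha>" "HLYA sE brE trE \<alpha>E"
    and p_hom: "HLYA_hom sE brE trE \<alpha>E sT brT trT \<alpha> p" and kernel: "range i = {z. p z = 0}"
    unfolding abelian_extension_def HLYA_extension_def by blast+
  moreover from assms(4) have "Vector_Spaces.linear sT sE \<sigma>" "\<And>x. \<alpha>E (\<sigma> x) = \<sigma> (\<alpha> x)"
    and p_\<sigma>: "\<And>x. p (\<sigma> x) = x"
    unfolding is_section_def by blast+
  ultimately interpret HLYA_section sT brT trT \<alpha> sE brE trE \<alpha>E \<sigma>
    by (simp add: HLYA_section_def HLYA_section_axioms_def hom_lie_yamaguti_def)
  have "cocycle23 sT brT trT \<alpha> sE (range i) \<alpha>E (\<lambda>x u. brE (\<sigma> x) u)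
          (\<lambda>x1 x2 u. trE (\<sigma> x1) (\<sigma> x2) u) (\<lambda>x1 x2 u. trE u (\<sigma> x1) (\<sigma> x2))
          bracket_defect triple_defect"
    by (rule cocycle23_defects)
      (simp_all add: kernel bracket_defect_in_kernel[OF p_hom p_\<sigma>] triple_defect_in_kernel[OF p_hom p_\<sigma>])
  then show ?thesis
    unfolding bracket_defect_def[abs_def] triple_defect_def[abs_def] .
qed

end
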